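(* Let $N\ge3$, $\frac{N}{N-1}<p<2$, $\xi=(p-1)(N-1)$, $\beta=\frac{p-1}{\xi-1}$, $\sigma=\frac{2-p}{p-1}$, and let $0<R\le\infty$ and $0\le t\le\infty$. (a) If $\varphi\in X_1(B_R)$ satisfies $L_t^{+}(\varphi)=0$ in $B_R\setminus\{0\}$, with $\varphi=0$ on $\partial B_R$ when $R$ is finite, then $\varphi=0$. (b) If $\varphi\in X(B_R)$ satisfies $L_t^{-}(\varphi)=0$ in $B_R\setminus\{0\}$, with $\varphi=0$ on $\partial B_R$ when $R$ is finite, then $\varphi=0$ when $R$ is finite, and $\varphi$ is constant when $R=\infty$.
   Context: For $0\le t<\infty$, $L_t^{\pm}(\zeta)=-\Delta\zeta\pm\frac{p}{t|x|^{\xi-1}+\beta}\frac{x\cdot\nabla\zeta}{|x|^2}$; for $t=\infty$ the operator is understood as the limit $L_\infty^{\pm}=-\Delta$. $B_R=\{|x|<R\}$ ($B_\infty=\mathbb{R}^N$). $X(B_R)$ is the set of functions $\varphi$ on $B_R\setminus\{0\}$ with $\sup_{0<|x|<R}\{|x|^{\sigma}|\varphi(x)|+|x|^{\sigma+1}|\nabla\varphi(x)|\}<\infty$; $X_1(B_R)$ is the subspace of those with $\int_{S^{N-1}}\varphi(r\theta)\,d\theta=0$ for all $0<r<R$. *)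

theory Defs
  imports "HOL-Analysis.Analysis"
begin

definition punct :: "ereal \<Rightarrow> 'a::euclidean_space set" where
  "punct R = {x. 0 < norm x \<and> ereal (norm x) < R}"

definition pderiv :: "('a::euclidean_space \<Rightarrow> real) \<Rightarrow> 'a \<Rightarrow> 'a \<Rightarrow> real" where
  "pderiv f i x = frechet_derivative f (at x) i"

definition grad :: "('a::euclidean_space \<Rightarrow> real) \<Rightarrow> 'a \<Rightarrow> 'a" where
  "grad f x = (\<Sum>i\<in>Basis. pderiv f i x *\<^sub>R i)"

definition laplacian :: "('a::euclidean_space \<Rightarrow> real) \<Rightarrow> 'a \<Rightarrow> real" where
  "laplacian f x = (\<Sum>i\<in>Basis. pderiv (pderiv f i) i x)"

definition C2_on :: "'a::euclidean_space set \<Rightarrow> ('a \<Rightarrow> real) \<Rightarrow> bool" where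
  "C2_on U f \<longleftrightarrow> (\<forall>x\<in>U. f differentiable at x) \<and>
     (\<forall>i\<in>Basis. \<forall>x\<in>U. pderiv f i differentiable at x) \<and>
     (\<forall>i\<in>Basis. \<forall>j\<in>Basis. continuous_on U (pderiv (pderiv f i) j))"

text \<open>Coefficient p/(t |x|^(xi-1) + beta); for t = \<infinity> it is 0 (so L_\<infinity> = -Delta).\<close>
definition Lcoef :: "real \<Rightarrow> real \<Rightarrow> real \<Rightarrow> ereal \<Rightarrow> 'a::euclidean_space \<Rightarrow> real" where
  "Lcoef p \<xi> \<beta> t x = (case t of ereal s \<Rightarrow> p / (s * norm x powr (\<xi> - 1) + \<beta>) | _ \<Rightarrow> 0)"

definition Lplus :: "real \<Rightarrow> real \<Rightarrow> real \<Rightarrow> ereal \<Rightarrow> ('a::euclidean_space \<Rightarrow> real) \<Rightarrow> 'a \<Rightarrow> real" where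
  "Lplus p \<xi> \<beta> t f x = - laplacian f x + Lcoef p \<xi> \<beta> t x * ((x \<bullet> grad f x) / (norm x)\<^sup>2)"

definition Lminus :: "real \<Rightarrow> real \<Rightarrow> real \<Rightarrow> ereal \<Rightarrow> ('a::euclidean_space \<Rightarrow> real) \<Rightarrow> 'a \<Rightarrow> real" where
  "Lminus p \<xi> \<beta> t f x = - laplacian f x - Lcoef p \<xi> \<beta> t x * ((x \<bullet> grad f x) / (norm x)\<^sup>2)"

definition inX :: "real \<Rightarrow> ereal \<Rightarrow> ('a::euclidean_space \<Rightarrow> real) \<Rightarrow> bool" where
  "inX \<sigma> R f \<longleftrightarrow> (\<exists>C. \<forall>x\<in>punct R.
      norm x powr \<sigma> * \<bar>f x\<bar> + norm x powr (\<sigma> + 1) * norm (grad f x) \<le> C)"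

text \<open>Integral over the unit sphere S^{N-1} w.r.t. surface measure, via the cone
  measure identity  int_S g d(theta) = N * int_{B_1} g(x/|x|) dx.\<close>
definition sphere_integral :: "('a::euclidean_space \<Rightarrow> real) \<Rightarrow> real" where
  "sphere_integral g = real DIM('a) * integral (ball 0 1) (\<lambda>x. g (x /\<^sub>R norm x))"

definition inX1 :: "real \<Rightarrow> ereal \<Rightarrow> ('a::euclidean_space \<Rightarrow> real) \<Rightarrow> bool" where
  "inX1 \<sigma> R f \<longleftrightarrow> inX \<sigma> R f \<and>
     (\<forall>r. 0 < r \<and> ereal r < R \<longrightarrow> sphere_integral (\<lambda>\<theta>. f (r *\<^sub>R \<theta>)) = 0)"

definition zero_bdry :: "ereal \<Rightarrow> ('a::euclidean_space \<Rightarrow> real) \<Rightarrow> bool" where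
  "zero_bdry R f \<longleftrightarrow> (\<forall>y. ereal (norm y) = R \<longrightarrow> (f \<longlongrightarrow> 0) (at y within punct R))"

end

theory Submission
  imports Defs
begin

(*
  Part (b) is a maximum principle. For sigma < a < N - 2 and eps > 0 the function
  +-phi - eps |x|^(-a) tends to -infinity at the origin, because phi = O(|x|^(-sigma)), and it is
  eventually below any positive level near the sphere |x| = R, or at infinity. If it were positive
  somewhere it would therefore attain an interior maximum, where its gradient vanishes and its
  Laplacian is nonpositive. But L^- maps |x|^(-a) to a (N - 2 - a + c) |x|^(-a-2) > 0, where c >= 0
  is the drift coefficient, a contradiction. Hence phi = 0; for R = infinity this is the constant 0.

  Part (a) is a reflection argument. For a unit vector e let x_e be the mirror image of x in the
  hyperplane x . e = 0. As the coefficients of L^+ are radial, psi(x) = phi(x) - phi(x_e) solves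
  L^+ psi = 0 as well; it vanishes on the hyperplane, so |psi| <= K (x . e) |x|^(-sigma-1). The same
  maximum principle on the half space x . e > 0, with the barrier (x . e) |x|^(-b), b = sigma + 3/2,
  and L^+((x . e) |x|^(-b)) = (b (N - b) - c (b - 1)) (x . e) |x|^(-b-2) > 0, gives psi = 0. So phi
  is invariant under all reflections, hence radial, and having mean zero on every sphere it vanishes.
*)


section \<open>Calculus along lines\<close>

lemma open_punct: "open (punct R :: 'a::euclidean_space set)"
  unfolding punct_def
  by (intro open_Collect_conj open_Collect_less continuous_on_ereal continuous_intros)

lemma frechet_derivative_eq_inner_grad:
  assumes "f differentiable at z"
  shows "frechet_derivative f (at z) v = v \<bullet> grad f z"
proof -
  have "linear (frechet_derivative f (at z))"
    using assms by (rule linear_frechet_derivative)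
  then have "frechet_derivative f (at z) (\<Sum>i\<in>Basis. (v \<bullet> i) *\<^sub>R i)
      = (\<Sum>i\<in>Basis. (v \<bullet> i) * frechet_derivative f (at z) i)"
    by (simp add: linear_sum linear_scale)
  then show ?thesis
    by (simp add: euclidean_representation grad_def pderiv_def inner_sum_right mult.commute)
qed

lemma DERIV_along_line:
  assumes "f differentiable at (y + s *\<^sub>R v)"
  shows "((\<lambda>s. f (y + s *\<^sub>R v)) has_real_derivative v \<bullet> grad f (y + s *\<^sub>R v)) (at s)"
proof -
  let ?z = "y + s *\<^sub>R v"
  have "(f has_derivative frechet_derivative f (at ?z)) (at ?z)"
    using assms frechet_derivative_works by blast
  moreover have "((\<lambda>s. y + s *\<^sub>R v) has_derivative (\<lambda>h. h *\<^sub>R v)) (at s)"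
    by (auto intro!: derivative_eq_intros)
  ultimately have "((\<lambda>s. f (y + s *\<^sub>R v)) has_derivative (\<lambda>h. frechet_derivative f (at ?z) (h *\<^sub>R v))) (at s)"
    using has_derivative_compose by fastforce
  moreover have "(\<lambda>h. frechet_derivative f (at ?z) (h *\<^sub>R v)) = (*) (v \<bullet> grad f ?z)"
    using linear_frechet_derivative[OF assms] frechet_derivative_eq_inner_grad[OF assms]
    by (intro ext) (simp add: linear_scale mult.commute)
  ultimately show ?thesis
    by (simp add: has_field_derivative_def)
qed

lemma C2_on_differentiable:
  assumes "C2_on U f" "x \<in> U"
  shows "f differentiable at x" "\<forall>i\<in>Basis. pderiv f i differentiable at x"
  using assms by (auto simp: C2_on_def)

lemma C2_on_imp_continuous_on: "C2_on U f \<Longrightarrow> continuous_on U f"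
  by (auto simp: C2_on_def intro!: continuous_at_imp_continuous_on differentiable_imp_continuous_within)

definition hessian_form :: "('a::euclidean_space \<Rightarrow> real) \<Rightarrow> 'a \<Rightarrow> 'a \<Rightarrow> real" where
  "hessian_form f y v = (\<Sum>i\<in>Basis. (v \<bullet> i) * (v \<bullet> grad (pderiv f i) y))"

lemma DERIV_grad_along_line:
  assumes "\<forall>i\<in>Basis. pderiv f i differentiable at y"
  shows "((\<lambda>s. v \<bullet> grad f (y + s *\<^sub>R v)) has_real_derivative hessian_form f y v) (at 0)"
proof -
  have "(\<lambda>s. v \<bullet> grad f (y + s *\<^sub>R v)) = (\<lambda>s. \<Sum>i\<in>Basis. (v \<bullet> i) * pderiv f i (y + s *\<^sub>R v))"
    by (simp add: grad_def inner_sum_right mult.commute)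
  moreover have "((\<lambda>s. \<Sum>i\<in>Basis. (v \<bullet> i) * pderiv f i (y + s *\<^sub>R v)) has_real_derivative
      hessian_form f y v) (at 0)"
    unfolding hessian_form_def
  proof (intro DERIV_sum DERIV_cmult)
    fix i :: 'a
    assume "i \<in> Basis"
    then have "pderiv f i differentiable at (y + 0 *\<^sub>R v)"
      using assms by simp
    from DERIV_along_line[OF this]
    show "((\<lambda>s. pderiv f i (y + s *\<^sub>R v)) has_real_derivative v \<bullet> grad (pderiv f i) y) (at 0)"
      by simp
  qed
  ultimately show ?thesis
    by simp
qed

lemma hessian_form_eq_sum:
  "hessian_form f y v = (\<Sum>j\<in>Basis. \<Sum>k\<in>Basis. (v \<bullet> j) * (v \<bullet> k) * pderiv (pderiv f j) k y)"
  unfolding hessian_form_def grad_def inner_sum_right sum_distrib_left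
  by (intro sum.cong refl) (simp add: ac_simps)

lemma sum_Basis_inner_mult:
  "i \<in> Basis \<Longrightarrow> (\<Sum>j\<in>Basis. (i \<bullet> j) * g j) = (g i :: real)"
  by (simp add: inner_Basis if_distrib[where f = "\<lambda>c. c * _"] cong: if_cong)

lemma sum_hessian_form_selfadjoint_involution:
  fixes T :: "'a::euclidean_space \<Rightarrow> 'a"
  assumes adjoint: "\<And>x y. T x \<bullet> y = x \<bullet> T y" and involution: "\<And>x. T (T x) = x"
  shows "(\<Sum>i\<in>Basis. hessian_form f y (T i)) = laplacian f y"
proof -
  have swap: "T x \<bullet> y = T y \<bullet> x" for x y
    using adjoint[of x y] inner_commute[of x "T y"] by linarith
  have orthonormal: "(\<Sum>i\<in>Basis. (T i \<bullet> j) * (T i \<bullet> k)) = j \<bullet> k" for j k :: 'a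
  proof -
    have "(\<Sum>i\<in>Basis. (T i \<bullet> j) * (T i \<bullet> k)) = (\<Sum>i\<in>Basis. (T j \<bullet> i) * (T k \<bullet> i))"
      by (rule sum.cong[OF refl], rule arg_cong2[where f = "(*)"], rule swap, rule swap)
    also have "\<dots> = T j \<bullet> T k"
      by (rule euclidean_inner[symmetric])
    also have "\<dots> = j \<bullet> k"
      by (simp only: adjoint involution)
    finally show ?thesis .
  qed
  have "(\<Sum>i\<in>Basis. hessian_form f y (T i))
      = (\<Sum>i\<in>Basis. \<Sum>j\<in>Basis. \<Sum>k\<in>Basis. (T i \<bullet> j) * (T i \<bullet> k) * pderiv (pderiv f j) k y)"
    unfolding hessian_form_eq_sum ..
  also have "\<dots> = (\<Sum>j\<in>Basis. \<Sum>k\<in>Basis. \<Sum>i\<in>Basis. (T i \<bullet> j) * (T i \<bullet> k) * pderiv (pderiv f j) k y)"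
    by (subst sum.swap) (rule sum.cong[OF refl], rule sum.swap)
  also have "\<dots> = (\<Sum>j\<in>Basis. \<Sum>k\<in>Basis. (j \<bullet> k) * pderiv (pderiv f j) k y)"
    by (simp only: sum_distrib_right[symmetric] orthonormal)
  also have "\<dots> = laplacian f y"
    unfolding laplacian_def by (intro sum.cong refl) (simp add: sum_Basis_inner_mult)
  finally show ?thesis .
qed

lemma sum_hessian_form_Basis: "(\<Sum>i\<in>Basis. hessian_form f y i) = laplacian f y"
  using sum_hessian_form_selfadjoint_involution[of id] by simp

lemma DERIV_local_max_second_order:
  fixes g g' :: "real \<Rightarrow> real"
  assumes \<delta>: "0 < \<delta>" and max: "\<And>s. \<bar>s\<bar> < \<delta> \<Longrightarrow> g s \<le> g 0"
    and g: "\<And>s. \<bar>s\<bar> < \<delta> \<Longrightarrow> (g has_real_derivative g' s) (at s)"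
    and g': "(g' has_real_derivative L) (at 0)"
  shows "g' 0 = 0" "L \<le> 0"
proof -
  show g'0: "g' 0 = 0"
    by (rule DERIV_local_max[OF g[of 0] \<delta>]) (use \<delta> max in auto)
  show "L \<le> 0"
  proof (rule ccontr)
    assume "\<not> L \<le> 0"
    then have "0 < L"
      by simp
    then obtain d where d: "0 < d" "\<And>h. 0 < h \<Longrightarrow> h < d \<Longrightarrow> g' 0 < g' h"
      using DERIV_pos_inc_right[OF g'] by fastforce
    define s where "s = min d \<delta> / 2"
    have s: "0 < s" "s < d" "s < \<delta>"
      using \<delta> d by (auto simp: s_def)
    have "\<exists>z>0. z < s \<and> g s - g 0 = (s - 0) * g' z"
      by (rule MVT2) (use s g in auto)
    then obtain z where z: "0 < z" "z < s" "g s - g 0 = s * g' z"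
      by auto
    then have "g 0 < g s"
      using d(2)[of z] s g'0 by (simp add: algebra_simps)
    with max[of s] s show False
      by simp
  qed
qed

lemma interior_max_along_line:
  fixes u :: "'a::euclidean_space \<Rightarrow> real"
  assumes "open D" "x0 \<in> D" "\<forall>x\<in>D. u x \<le> u x0"
    and u': "\<And>s. x0 + s *\<^sub>R v \<in> D \<Longrightarrow> ((\<lambda>s. u (x0 + s *\<^sub>R v)) has_real_derivative g' s) (at s)"
    and g': "(g' has_real_derivative L) (at 0)"
  shows "g' 0 = 0" "L \<le> 0"
proof -
  obtain r where r: "0 < r" "ball x0 r \<subseteq> D"
    using assms(1,2) open_contains_ball by blast
  define \<delta> where "\<delta> = r / (norm v + 1)"
  have nv: "0 < norm v + 1"
    by (simp add: add.commute add_pos_nonneg)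
  have "x0 + s *\<^sub>R v \<in> D" if "\<bar>s\<bar> < \<delta>" for s
  proof -
    have "norm (s *\<^sub>R v) \<le> \<bar>s\<bar> * (norm v + 1)"
      by (simp add: mult_left_mono)
    also have "\<dots> < r"
      using that nv by (simp add: \<delta>_def pos_less_divide_eq)
    finally show ?thesis
      using r by (auto simp: dist_norm)
  qed
  moreover have "0 < \<delta>"
    using r nv by (simp add: \<delta>_def)
  ultimately show "g' 0 = 0" "L \<le> 0"
    using DERIV_local_max_second_order[of \<delta> "\<lambda>s. u (x0 + s *\<^sub>R v)" g' L] assms(3) u' g'
    by auto
qed


section \<open>Reflections\<close>

definition reflect :: "'a::real_inner \<Rightarrow> 'a \<Rightarrow> 'a" where
  "reflect e x = x - (2 * (x \<bullet> e)) *\<^sub>R e"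

lemma inner_reflect: "reflect e x \<bullet> y = x \<bullet> reflect e y"
  by (simp add: reflect_def inner_diff_left inner_diff_right inner_commute)

lemma reflect_reflect: "norm e = 1 \<Longrightarrow> reflect e (reflect e x) = x"
  by (simp add: reflect_def inner_diff_left algebra_simps flip: power2_norm_eq_inner)

lemma inner_reflect_reflect: "norm e = 1 \<Longrightarrow> reflect e x \<bullet> reflect e y = x \<bullet> y"
  by (simp add: inner_reflect reflect_reflect)

lemma norm_reflect: "norm e = 1 \<Longrightarrow> norm (reflect e x) = norm x"
  by (simp add: norm_eq_sqrt_inner inner_reflect_reflect)

lemma reflect_add_scaleR: "reflect e (x + s *\<^sub>R v) = reflect e x + s *\<^sub>R reflect e v"
  by (simp add: reflect_def inner_add_left algebra_simps)

lemma dist_reflect: "norm e = 1 \<Longrightarrow> dist (reflect e x) (reflect e y) = dist x y"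
  by (metis add_diff_cancel_left' diff_add_cancel dist_norm norm_reflect reflect_add_scaleR
      scaleR_one)

lemma reflect_uminus: "reflect (- e) = reflect e"
  by (simp add: reflect_def fun_eq_iff)

lemma reflect_fixed: "x \<bullet> e = 0 \<Longrightarrow> reflect e x = x"
  by (simp add: reflect_def)

lemma isCont_reflect: "isCont (reflect e) x"
  unfolding reflect_def by (intro continuous_intros)

lemma reflect_in_punct:
  assumes "norm e = 1" "x \<in> punct R"
  shows "reflect e x \<in> punct R"
  using assms(2) unfolding punct_def mem_Collect_eq norm_reflect[OF assms(1)] .

lemma sum_hessian_form_reflect_Basis:
  "norm e = 1 \<Longrightarrow> (\<Sum>i\<in>Basis. hessian_form f y (reflect e i)) = laplacian f y"
  by (rule sum_hessian_form_selfadjoint_involution) (simp_all add: inner_reflect reflect_reflect)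

lemma DERIV_reflect_along_line:
  assumes "f differentiable at (reflect e y + s *\<^sub>R reflect e v)"
  shows "((\<lambda>s. f (reflect e (y + s *\<^sub>R v))) has_real_derivative
      reflect e v \<bullet> grad f (reflect e y + s *\<^sub>R reflect e v)) (at s)"
  using DERIV_along_line[OF assms] by (simp add: reflect_add_scaleR)

lemma reflect_exchanges_equal_norm:
  fixes x y :: "'a::real_inner"
  assumes "norm x = norm y" "x \<noteq> y"
  defines "e \<equiv> (1 / norm (x - y)) *\<^sub>R (x - y)"
  shows "norm e = 1" "0 < x \<bullet> e" "reflect e x = y"
proof -
  define d where "d = norm (x - y)"
  have d: "0 < d"
    using assms(2) by (simp add: d_def)
  show "norm e = 1"
    using d by (simp add: e_def d_def)
  have "d\<^sup>2 = x \<bullet> x - 2 * (x \<bullet> y) + y \<bullet> y"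
    by (simp add: d_def power2_norm_eq_inner inner_diff_left inner_diff_right inner_commute)
  moreover have "x \<bullet> x = y \<bullet> y"
    using assms(1) by (simp flip: power2_norm_eq_inner)
  ultimately have "x \<bullet> (x - y) = d\<^sup>2 / 2"
    by (simp add: inner_diff_right)
  then have xe: "x \<bullet> e = d / 2"
    unfolding e_def d_def[symmetric] inner_scaleR_right using d by (simp add: power2_eq_square)
  then show "0 < x \<bullet> e"
    using d by simp
  have "(2 * (x \<bullet> e)) *\<^sub>R e = x - y"
    using d unfolding xe by (simp add: e_def d_def[symmetric])
  then show "reflect e x = y"
    by (simp add: reflect_def)
qed

lemma radial_if_reflection_invariant:
  assumes inv: "\<And>e x. norm e = 1 \<Longrightarrow> x \<in> S \<Longrightarrow> f (reflect e x) = f x"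
    and "x \<in> S" "norm x = norm y"
  shows "f x = f y"
proof (cases "x = y")
  case False
  then show ?thesis
    using reflect_exchanges_equal_norm[OF assms(3) False] inv[OF _ assms(2)] by metis
qed simp


section \<open>Barrier functions\<close>

text \<open>\<open>barrier k e m x = (k + x \<bullet> e) |x|\<^sup>2\<^sup>m\<close> covers both barriers of the proof:
  \<open>|x|\<^sup>-\<^sup>a\<close> is \<open>k = 1, e = 0, m = -a/2\<close>, and \<open>(x \<bullet> e) |x|\<^sup>-\<^sup>b\<close> is \<open>k = 0, m = -b/2\<close>.\<close>

definition barrier :: "real \<Rightarrow> 'a::real_inner \<Rightarrow> real \<Rightarrow> 'a \<Rightarrow> real" where
  "barrier k e m x = (k + x \<bullet> e) * (x \<bullet> x) powr m"

definition barrier_deriv :: "real \<Rightarrow> 'a::real_inner \<Rightarrow> real \<Rightarrow> 'a \<Rightarrow> 'a \<Rightarrow> real" where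
  "barrier_deriv k e m x v =
     (v \<bullet> e) * (x \<bullet> x) powr m + (k + x \<bullet> e) * (m * (x \<bullet> x) powr (m - 1) * (2 * (x \<bullet> v)))"

definition barrier_deriv2 :: "real \<Rightarrow> 'a::real_inner \<Rightarrow> real \<Rightarrow> 'a \<Rightarrow> 'a \<Rightarrow> real" where
  "barrier_deriv2 k e m x v =
     2 * ((v \<bullet> e) * (m * (x \<bullet> x) powr (m - 1) * (2 * (x \<bullet> v))))
     + (k + x \<bullet> e) * (m * ((m - 1) * (x \<bullet> x) powr (m - 2) * (2 * (x \<bullet> v))) * (2 * (x \<bullet> v))
         + m * (x \<bullet> x) powr (m - 1) * (2 * (v \<bullet> v)))"

lemma inner_self_powr: "x \<noteq> 0 \<Longrightarrow> (x \<bullet> x) powr m = norm x powr (2 * m)"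
  by (simp add: powr_powr[symmetric] powr_numeral flip: power2_norm_eq_inner)

lemma barrier_along_line:
  "barrier k e m (y + s *\<^sub>R v) =
     (k + y \<bullet> e + s * (v \<bullet> e)) * (y \<bullet> y + 2 * s * (y \<bullet> v) + s\<^sup>2 * (v \<bullet> v)) powr m"
  by (simp add: barrier_def inner_add_left inner_add_right inner_commute power2_eq_square
      algebra_simps)

lemma barrier_deriv_along_line:
  "barrier_deriv k e m (y + s *\<^sub>R v) v =
     (v \<bullet> e) * (y \<bullet> y + 2 * s * (y \<bullet> v) + s\<^sup>2 * (v \<bullet> v)) powr m
     + (k + y \<bullet> e + s * (v \<bullet> e)) * (m * (y \<bullet> y + 2 * s * (y \<bullet> v) + s\<^sup>2 * (v \<bullet> v)) powr (m - 1)
         * (2 * (y \<bullet> v) + 2 * s * (v \<bullet> v)))"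
  by (simp add: barrier_deriv_def inner_add_left inner_add_right inner_commute power2_eq_square
      algebra_simps)

lemma DERIV_barrier_along_line:
  assumes "y + s *\<^sub>R v \<noteq> 0"
  shows "((\<lambda>s. barrier k e m (y + s *\<^sub>R v)) has_real_derivative barrier_deriv k e m (y + s *\<^sub>R v) v)
           (at s)"
proof -
  have "0 < (y + s *\<^sub>R v) \<bullet> (y + s *\<^sub>R v)"
    using assms by simp
  then have "0 < y \<bullet> y + 2 * s * (y \<bullet> v) + s\<^sup>2 * (v \<bullet> v)"
    by (simp add: inner_add_left inner_add_right inner_commute power2_eq_square algebra_simps)
  then show ?thesis
    unfolding barrier_along_line barrier_deriv_along_line
    by (auto intro!: derivative_eq_intros)
qed

lemma DERIV_barrier_deriv_along_line:
  assumes "y \<noteq> 0"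
  shows "((\<lambda>s. barrier_deriv k e m (y + s *\<^sub>R v) v) has_real_derivative barrier_deriv2 k e m y v)
           (at 0)"
proof -
  define Q where "Q s = y \<bullet> y + 2 * s * (y \<bullet> v) + s\<^sup>2 * (v \<bullet> v)" for s :: real
  have Q0: "0 < Q 0" "Q 0 = y \<bullet> y"
    using assms by (simp_all add: Q_def)
  have Q': "(Q has_real_derivative 2 * (y \<bullet> v)) (at 0)"
    unfolding Q_def by (auto intro!: derivative_eq_intros)
  have "((\<lambda>s. (v \<bullet> e) * Q s powr m
       + (k + y \<bullet> e + s * (v \<bullet> e)) * (m * Q s powr (m - 1) * (2 * (y \<bullet> v) + 2 * s * (v \<bullet> v))))
     has_real_derivative barrier_deriv2 k e m y v) (at 0)"
    using Q0 by (auto intro!: derivative_eq_intros Q' simp: barrier_deriv2_def algebra_simps)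
  then show ?thesis
    by (simp add: barrier_deriv_along_line Q_def)
qed

lemma sum_barrier_deriv2_Basis:
  fixes x e :: "'a::euclidean_space"
  assumes "x \<noteq> 0"
  shows "(\<Sum>i\<in>Basis. barrier_deriv2 k e m x i) =
    (x \<bullet> x) powr (m - 1) * (4 * m * (x \<bullet> e) + (k + x \<bullet> e) * (4 * m * (m - 1) + 2 * m * DIM('a)))"
proof -
  define q where "q = x \<bullet> x"
  define A where "A = 4 * m * q powr (m - 1)"
  define B where "B = (k + x \<bullet> e) * (4 * m * (m - 1) * q powr (m - 2))"
  define C where "C = (k + x \<bullet> e) * (2 * m * q powr (m - 1))"
  have "barrier_deriv2 k e m x i = A * ((x \<bullet> i) * (e \<bullet> i)) + B * ((x \<bullet> i) * (x \<bullet> i)) + C * (i \<bullet> i)"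
    for i :: 'a
    by (simp add: barrier_deriv2_def A_def B_def C_def q_def inner_commute algebra_simps)
  then have "(\<Sum>i\<in>Basis. barrier_deriv2 k e m x i) = A * (x \<bullet> e) + B * q + C * DIM('a)"
    by (simp add: sum.distrib q_def flip: sum_distrib_left euclidean_inner)
  moreover have "q powr (m - 2) * q = q powr (m - 1)"
    using assms by (simp add: q_def powr_diff power2_eq_square)
  then have "B * q = (k + x \<bullet> e) * (4 * m * (m - 1) * q powr (m - 1))"
    by (simp add: B_def mult.assoc)
  ultimately show ?thesis
    by (simp add: A_def C_def q_def algebra_simps)
qed

lemma barrier_deriv_radial:
  assumes "x \<noteq> 0"
  shows "barrier_deriv k e m x x = (x \<bullet> x) powr m * (x \<bullet> e + (k + x \<bullet> e) * (2 * m))"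
  using assms by (simp add: barrier_deriv_def powr_diff field_simps)


section \<open>Maximum principle\<close>

lemma zero_bdry_small_near:
  assumes "zero_bdry R \<phi>" "ereal (norm z) = R" "0 < \<eta>"
  obtains d where "0 < d" "\<And>x. x \<in> punct R \<Longrightarrow> dist x z < d \<Longrightarrow> \<bar>\<phi> x\<bar> < \<eta>"
proof -
  have "(\<phi> \<longlongrightarrow> 0) (at z within punct R)"
    using assms(1,2) by (simp add: zero_bdry_def)
  then have "\<forall>\<^sub>F x in at z within punct R. dist (\<phi> x) 0 < \<eta>"
    using assms(3) tendsto_iff by blast
  then obtain d where "0 < d" "\<And>x. x \<in> punct R \<Longrightarrow> x \<noteq> z \<Longrightarrow> dist x z < d \<Longrightarrow> \<bar>\<phi> x\<bar> < \<eta>"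
    unfolding eventually_at by auto
  moreover have "x \<noteq> z" if "x \<in> punct R" for x
    using that assms(2) by (auto simp: punct_def)
  ultimately show ?thesis
    using that by blast
qed

lemma closed_norm_le_ereal: "closed {x::'a::euclidean_space. ereal (norm x) \<le> R}"
  by (intro closed_Collect_le continuous_on_ereal continuous_intros)

text \<open>The superlevel set \<open>{u \<ge> u x1}\<close> is closed in the whole space: its limit points inside
  \<open>B\<^sub>R\<close> lie in \<open>D\<close> by the assumption on \<open>T\<close>, and there are none on the sphere \<open>|z| = R\<close>.\<close>

lemma attains_max_if_superlevel_bounded:
  fixes u :: "'a::euclidean_space \<Rightarrow> real"
  assumes D: "D \<subseteq> punct R" and u: "continuous_on D u" and x1: "x1 \<in> D"
    and T: "closed T" "bounded T" "{x\<in>D. u x1 \<le> u x} \<subseteq> T"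
    and T_D: "\<And>z. z \<in> T \<Longrightarrow> ereal (norm z) < R \<Longrightarrow> z \<in> D"
    and sphere: "\<And>z. ereal (norm z) = R \<Longrightarrow> \<exists>d>0. \<forall>x\<in>D. dist x z < d \<longrightarrow> u x < u x1"
  obtains x0 where "x0 \<in> D" "\<forall>x\<in>D. u x \<le> u x0"
proof -
  define S where "S = {x\<in>D. u x1 \<le> u x}"
  have "closedin (top_of_set D) (D \<inter> u -` {u x1..})"
    by (rule continuous_closedin_preimage[OF u]) simp
  moreover have "D \<inter> u -` {u x1..} = S"
    by (auto simp: S_def)
  ultimately obtain T' where T': "closed T'" "S = D \<inter> T'"
    by (auto simp: closedin_closed)
  have "z \<in> S" if z: "z \<in> closure S" for z
  proof (cases "ereal (norm z) < R")
    case True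
    have "z \<in> T" "z \<in> T'"
      using closure_minimal[OF T(3)[folded S_def] T(1)] closure_minimal[of S T'] T' z by auto
    then show ?thesis
      using T_D[OF _ True] T' by auto
  next
    case False
    have "S \<subseteq> {x. ereal (norm x) \<le> R}"
      using D by (auto simp: S_def punct_def)
    then have "ereal (norm z) \<le> R"
      using closure_minimal[OF _ closed_norm_le_ereal] z by blast
    with False have "ereal (norm z) = R"
      by simp
    then obtain d where d: "0 < d" "\<forall>x\<in>D. dist x z < d \<longrightarrow> u x < u x1"
      using sphere by blast
    moreover obtain x where "x \<in> S" "dist x z < d"
      using z d(1) by (auto simp: closure_approachable)
    ultimately show ?thesis
      by (auto simp: S_def)
  qed
  then have "closed S"
    using closure_subset_eq by blast
  moreover have "bounded S"
    using T(2,3) by (auto simp: S_def intro: bounded_subset)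
  moreover have "S \<noteq> {}"
    using x1 by (auto simp: S_def)
  moreover have "continuous_on S u"
    using u by (rule continuous_on_subset) (auto simp: S_def)
  ultimately obtain x0 where x0: "x0 \<in> S" "\<forall>y\<in>S. u y \<le> u x0"
    using continuous_attains_sup[of S u] by (auto simp: compact_eq_bounded_closed)
  have "u x \<le> u x0" if "x \<in> D" for x
    using x0 that by (cases "u x1 \<le> u x") (auto simp: S_def)
  with x0(1) show ?thesis
    using that by (auto simp: S_def)
qed

lemma le_root_of_le_mult_powr_neg:
  fixes r \<eta> C \<sigma> :: real
  assumes "0 < r" "0 < \<eta>" "0 < \<sigma>" "\<eta> \<le> C * r powr (-\<sigma>)"
  shows "r \<le> (C / \<eta>) powr (1 / \<sigma>)"
proof -
  have "\<eta> * r powr \<sigma> \<le> C * r powr (-\<sigma>) * r powr \<sigma>"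
    using assms by (intro mult_right_mono) auto
  also have "\<dots> = C"
    using assms(1) by (simp add: mult.assoc powr_add[symmetric])
  finally have "r powr \<sigma> \<le> C / \<eta>"
    using assms(2) by (simp add: field_simps)
  then have "(r powr \<sigma>) powr (1 / \<sigma>) \<le> (C / \<eta>) powr (1 / \<sigma>)"
    using assms by (intro powr_mono2) auto
  then show ?thesis
    using assms by (simp add: powr_powr)
qed

lemma root_le_of_mult_powr_neg_le:
  fixes r \<epsilon> C s a :: real
  assumes "0 < r" "0 < \<epsilon>" "0 < C" "s < a" "\<epsilon> * r powr (-a) \<le> C * r powr (-s)"
  shows "(\<epsilon> / C) powr (1 / (a - s)) \<le> r"
proof -
  have "\<epsilon> * r powr (-a) * r powr a \<le> C * r powr (-s) * r powr a"
    using assms by (intro mult_right_mono) auto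
  then have "\<epsilon> \<le> C * r powr (a - s)"
    using assms(1) by (simp add: mult.assoc powr_add[symmetric])
  then have "\<epsilon> / C \<le> r powr (a - s)"
    using assms(3) by (simp add: field_simps)
  then have "(\<epsilon> / C) powr (1 / (a - s)) \<le> (r powr (a - s)) powr (1 / (a - s))"
    using assms by (intro powr_mono2) auto
  then show ?thesis
    using assms by (simp add: powr_powr)
qed

lemma max_below_barrier_conditions:
  fixes w :: "'a::euclidean_space \<Rightarrow> real"
  assumes D: "open D" "x0 \<in> D" "0 \<notin> D"
    and max: "\<And>x. x \<in> D \<Longrightarrow> w x - \<epsilon> * barrier k e m x \<le> w x0 - \<epsilon> * barrier k e m x0"
    and w': "\<And>v s. x0 + s *\<^sub>R v \<in> D \<Longrightarrow>
      ((\<lambda>s. w (x0 + s *\<^sub>R v)) has_real_derivative W1 v s) (at s)"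
    and w'': "\<And>v. (W1 v has_real_derivative W2 v) (at 0)"
  shows "W1 x0 0 = \<epsilon> * barrier_deriv k e m x0 x0"
    and "(\<Sum>i\<in>Basis. W2 i) \<le> \<epsilon> * (\<Sum>i\<in>Basis. barrier_deriv2 k e m x0 i)"
proof -
  define u where "u x = w x - \<epsilon> * barrier k e m x" for x
  have crit: "W1 v 0 - \<epsilon> * barrier_deriv k e m (x0 + 0 *\<^sub>R v) v = 0"
    "W2 v - \<epsilon> * barrier_deriv2 k e m x0 v \<le> 0" for v
  proof -
    have "((\<lambda>s. u (x0 + s *\<^sub>R v)) has_real_derivative
        W1 v s - \<epsilon> * barrier_deriv k e m (x0 + s *\<^sub>R v) v) (at s)" if "x0 + s *\<^sub>R v \<in> D" for s
      unfolding u_def using that D(3)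
      by (intro DERIV_diff DERIV_cmult w' DERIV_barrier_along_line) auto
    moreover have "((\<lambda>s. W1 v s - \<epsilon> * barrier_deriv k e m (x0 + s *\<^sub>R v) v) has_real_derivative
        W2 v - \<epsilon> * barrier_deriv2 k e m x0 v) (at 0)"
      using D(2,3) by (intro DERIV_diff DERIV_cmult w'' DERIV_barrier_deriv_along_line) auto
    moreover have "\<forall>x\<in>D. u x \<le> u x0"
      using max by (simp add: u_def)
    ultimately show "W1 v 0 - \<epsilon> * barrier_deriv k e m (x0 + 0 *\<^sub>R v) v = 0"
      "W2 v - \<epsilon> * barrier_deriv2 k e m x0 v \<le> 0"
      using interior_max_along_line[OF D(1,2)] by (metis (no_types, lifting))+
  qed
  from crit(1)[of x0] show "W1 x0 0 = \<epsilon> * barrier_deriv k e m x0 x0"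
    by simp
  have "(\<Sum>i\<in>Basis. W2 i - \<epsilon> * barrier_deriv2 k e m x0 i) \<le> 0"
    using crit(2) by (intro sum_nonpos) auto
  then show "(\<Sum>i\<in>Basis. W2 i) \<le> \<epsilon> * (\<Sum>i\<in>Basis. barrier_deriv2 k e m x0 i)"
    by (simp add: sum_subtractf sum_distrib_left)
qed

lemma radial_superlevel_bounds:
  fixes r w C \<sigma> a \<epsilon> \<eta> :: real
  assumes "0 < r" "0 < \<sigma>" "\<sigma> < a" "0 < \<epsilon>" "0 < \<eta>" "0 < C"
    and "w \<le> C * r powr (-\<sigma>)" "\<eta> \<le> w - \<epsilon> * r powr (-a)"
  shows "(\<epsilon> / C) powr (1 / (a - \<sigma>)) \<le> r" "r \<le> (C / \<eta>) powr (1 / \<sigma>)"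
proof -
  have "0 < \<epsilon> * r powr (-a)"
    using assms by simp
  moreover from this have "\<eta> \<le> C * r powr (-\<sigma>)"
    using assms(7,8) by linarith
  ultimately show "(\<epsilon> / C) powr (1 / (a - \<sigma>)) \<le> r" "r \<le> (C / \<eta>) powr (1 / \<sigma>)"
    using assms by (auto intro!: root_le_of_mult_powr_neg_le le_root_of_le_mult_powr_neg)
qed

lemma exists_max_below_radial_barrier:
  fixes w :: "'a::euclidean_space \<Rightarrow> real"
  assumes \<sigma>: "0 < \<sigma>" "\<sigma> < a" and \<epsilon>: "0 < \<epsilon>" and w: "continuous_on (punct R) w"
    and decay: "\<And>x. x \<in> punct R \<Longrightarrow> w x \<le> C * norm x powr (-\<sigma>)"
    and sphere: "\<And>z \<eta>. ereal (norm z) = R \<Longrightarrow> 0 < \<eta> \<Longrightarrow>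
      \<exists>d>0. \<forall>x\<in>punct R. dist x z < d \<longrightarrow> w x < \<eta>"
    and x1: "x1 \<in> punct R" "0 < w x1 - \<epsilon> * norm x1 powr (-a)"
  obtains x0 where "x0 \<in> punct R"
    "\<And>x. x \<in> punct R \<Longrightarrow> w x - \<epsilon> * norm x powr (-a) \<le> w x0 - \<epsilon> * norm x0 powr (-a)"
proof -
  define u where "u x = w x - \<epsilon> * norm x powr (-a)" for x
  have nz: "0 < norm x" if "x \<in> punct R" for x
    using that by (simp add: punct_def)
  have below: "u x < w x" if "x \<in> punct R" for x
    using \<epsilon> nz[OF that] by (simp add: u_def)
  have \<eta>: "0 < u x1"
    using x1(2) by (simp add: u_def)
  have "0 < C * norm x1 powr (-\<sigma>)"
    using decay[OF x1(1)] below[OF x1(1)] \<eta> by linarith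
  then have C: "0 < C"
    using powr_ge_zero[of "norm x1" "-\<sigma>"] by (auto simp: zero_less_mult_iff)
  define r0 where "r0 = (\<epsilon> / C) powr (1 / (a - \<sigma>))"
  define T where "T = {x::'a. r0 \<le> norm x \<and> norm x \<le> (C / u x1) powr (1 / \<sigma>)}"
  have "continuous_on (punct R) u"
    unfolding u_def using w by (auto intro!: continuous_intros simp: punct_def)
  then obtain x0 where "x0 \<in> punct R" "\<forall>x\<in>punct R. u x \<le> u x0"
  proof (rule attains_max_if_superlevel_bounded[OF subset_refl _ x1(1), where T = T])
    show "closed T"
      unfolding T_def by (intro closed_Collect_conj closed_Collect_le continuous_intros)
    show "bounded T"
      unfolding T_def by (rule bounded_subset[OF bounded_cball[of 0 "(C / u x1) powr (1 / \<sigma>)"]]) auto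
    show "{x \<in> punct R. u x1 \<le> u x} \<subseteq> T"
    proof
      fix x
      assume "x \<in> {x \<in> punct R. u x1 \<le> u x}"
      then have x: "x \<in> punct R" "u x1 \<le> w x - \<epsilon> * norm x powr (-a)"
        by (simp_all add: u_def)
      from radial_superlevel_bounds[OF nz[OF x(1)] \<sigma> \<epsilon> \<eta> C decay[OF x(1)] x(2)]
      show "x \<in> T"
        by (simp add: T_def r0_def)
    qed
    show "z \<in> punct R" if "z \<in> T" "ereal (norm z) < R" for z
      using that \<epsilon> C by (auto simp: T_def r0_def punct_def)
    show "\<exists>d>0. \<forall>x\<in>punct R. dist x z < d \<longrightarrow> u x < u x1" if "ereal (norm z) = R" for z
      using sphere[OF that \<eta>] below less_trans by blast
  qed
  then show ?thesis
    using that by (simp add: u_def)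
qed

lemma halfspace_superlevel_bounds:
  fixes r \<alpha> w C K \<sigma> b \<epsilon> \<eta> :: real
  assumes "0 < r" "0 < \<alpha>" "0 < \<sigma>" "\<sigma> + 1 < b" "0 < \<epsilon>" "0 < \<eta>" "0 < C" "0 < K"
    and "w \<le> C * r powr (-\<sigma>)" "w \<le> K * \<alpha> * r powr (-\<sigma> - 1)"
    and "\<eta> \<le> w - \<epsilon> * (\<alpha> * r powr (-b))"
  defines "r0 \<equiv> (\<epsilon> / K) powr (1 / (b - (\<sigma> + 1)))"
  shows "r0 \<le> r" "r \<le> (C / \<eta>) powr (1 / \<sigma>)" "\<eta> / (K * r0 powr (-\<sigma> - 1)) \<le> \<alpha>"
proof -
  have barrier_pos: "0 < \<epsilon> * (\<alpha> * r powr (-b))"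
    using assms by simp
  then have "\<alpha> * (\<epsilon> * r powr (-b)) \<le> \<alpha> * (K * r powr (-\<sigma> - 1))"
    using assms(6,10,11) by (simp add: algebra_simps)
  then have "\<epsilon> * r powr (-b) \<le> K * r powr (-(\<sigma> + 1))"
    using assms(2) by simp
  then show r0: "r0 \<le> r"
    unfolding r0_def using assms by (intro root_le_of_mult_powr_neg_le) auto
  have "\<eta> \<le> C * r powr (-\<sigma>)"
    using barrier_pos assms(9,11) by linarith
  then show "r \<le> (C / \<eta>) powr (1 / \<sigma>)"
    using assms by (intro le_root_of_le_mult_powr_neg) auto
  have "0 < r0"
    using assms by (simp add: r0_def)
  then have "r powr (-\<sigma> - 1) \<le> r0 powr (-\<sigma> - 1)"
    using r0 assms by (intro powr_mono2') auto
  then have "K * \<alpha> * r powr (-\<sigma> - 1) \<le> K * \<alpha> * r0 powr (-\<sigma> - 1)"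
    using assms(2,8) by (intro mult_left_mono) auto
  then have "\<eta> \<le> \<alpha> * (K * r0 powr (-\<sigma> - 1))"
    using barrier_pos assms(10,11) by (simp add: ac_simps)
  moreover have "0 < K * r0 powr (-\<sigma> - 1)"
    using \<open>0 < r0\<close> assms(8) by simp
  ultimately show "\<eta> / (K * r0 powr (-\<sigma> - 1)) \<le> \<alpha>"
    by (simp add: pos_divide_le_eq)
qed

lemma exists_max_below_halfspace_barrier:
  fixes w :: "'a::euclidean_space \<Rightarrow> real" and e :: 'a and R :: ereal
  defines "D \<equiv> punct R \<inter> {x. 0 < x \<bullet> e}"
  assumes \<sigma>: "0 < \<sigma>" "\<sigma> + 1 < b" and \<epsilon>: "0 < \<epsilon>" and w: "continuous_on D w"
    and decay: "\<And>x. x \<in> D \<Longrightarrow> w x \<le> K * norm x powr (-\<sigma>)"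
      "\<And>x. x \<in> D \<Longrightarrow> w x \<le> K * (x \<bullet> e) * norm x powr (-\<sigma> - 1)"
    and sphere: "\<And>z \<eta>. ereal (norm z) = R \<Longrightarrow> 0 < \<eta> \<Longrightarrow>
      \<exists>d>0. \<forall>x\<in>D. dist x z < d \<longrightarrow> w x < \<eta>"
    and x1: "x1 \<in> D" "0 < w x1 - \<epsilon> * ((x1 \<bullet> e) * norm x1 powr (-b))"
  obtains x0 where "x0 \<in> D" "\<And>x. x \<in> D \<Longrightarrow>
    w x - \<epsilon> * ((x \<bullet> e) * norm x powr (-b)) \<le> w x0 - \<epsilon> * ((x0 \<bullet> e) * norm x0 powr (-b))"
proof -
  define u where "u x = w x - \<epsilon> * ((x \<bullet> e) * norm x powr (-b))" for x
  have inD: "0 < norm x" "0 < x \<bullet> e" if "x \<in> D" for x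
    using that by (simp_all add: D_def punct_def)
  have below: "u x < w x" if "x \<in> D" for x
    using \<epsilon> inD[OF that] by (simp add: u_def)
  have \<eta>: "0 < u x1"
    using x1(2) by (simp add: u_def)
  have "0 < K * norm x1 powr (-\<sigma>)"
    using decay(1)[OF x1(1)] below[OF x1(1)] \<eta> by linarith
  then have K: "0 < K"
    using powr_ge_zero[of "norm x1" "-\<sigma>"] by (auto simp: zero_less_mult_iff)
  define r0 where "r0 = (\<epsilon> / K) powr (1 / (b - (\<sigma> + 1)))"
  define M where "M = (K / u x1) powr (1 / \<sigma>)"
  define T where "T = {x. r0 \<le> norm x \<and> norm x \<le> M \<and> u x1 / (K * r0 powr (-\<sigma> - 1)) \<le> x \<bullet> e}"
  have "D \<subseteq> punct R"
    by (simp add: D_def)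
  moreover have "continuous_on D u"
    unfolding u_def using w by (auto intro!: continuous_intros simp: D_def punct_def)
  ultimately obtain x0 where "x0 \<in> D" "\<forall>x\<in>D. u x \<le> u x0"
  proof (rule attains_max_if_superlevel_bounded[OF _ _ x1(1), where T = T])
    show "closed T"
      unfolding T_def by (intro closed_Collect_conj closed_Collect_le continuous_intros)
    show "bounded T"
      unfolding T_def by (rule bounded_subset[OF bounded_cball[of 0 M]]) auto
    show "{x \<in> D. u x1 \<le> u x} \<subseteq> T"
    proof
      fix x
      assume "x \<in> {x \<in> D. u x1 \<le> u x}"
      then have x: "x \<in> D" "u x1 \<le> w x - \<epsilon> * ((x \<bullet> e) * norm x powr (-b))"
        by (simp_all add: u_def)
      from halfspace_superlevel_bounds[OF inD[OF x(1)] \<sigma> \<epsilon> \<eta> K K decay(1,2)[OF x(1)] x(2)]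
      show "x \<in> T"
        by (simp add: T_def r0_def M_def)
    qed
    show "z \<in> D" if "z \<in> T" "ereal (norm z) < R" for z
    proof -
      have "0 < r0" "0 < u x1 / (K * r0 powr (-\<sigma> - 1))"
        using \<eta> K \<epsilon> by (simp_all add: r0_def)
      then show ?thesis
        using that by (auto simp: T_def D_def punct_def)
    qed
    show "\<exists>d>0. \<forall>x\<in>D. dist x z < d \<longrightarrow> u x < u x1" if "ereal (norm z) = R" for z
      using sphere[OF that \<eta>] below less_trans by blast
  qed
  then show ?thesis
    using that by (simp add: u_def)
qed


lemma inX_decay_bounds:
  fixes \<phi> :: "'a::euclidean_space \<Rightarrow> real"
  assumes "inX \<sigma> R \<phi>"
  obtains C where "0 \<le> C"
    "\<And>x. x \<in> punct R \<Longrightarrow> \<bar>\<phi> x\<bar> \<le> C * norm x powr (-\<sigma>)"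
    "\<And>x. x \<in> punct R \<Longrightarrow> norm (grad \<phi> x) \<le> C * norm x powr (-\<sigma> - 1)"
proof -
  obtain C where C: "\<And>x. x \<in> punct R \<Longrightarrow>
      norm x powr \<sigma> * \<bar>\<phi> x\<bar> + norm x powr (\<sigma> + 1) * norm (grad \<phi> x) \<le> C"
    using assms unfolding inX_def by blast
  have weighted: "norm x powr \<sigma> * \<bar>\<phi> x\<bar> \<le> max C 0"
    "norm x powr (\<sigma> + 1) * norm (grad \<phi> x) \<le> max C 0" if "x \<in> punct R" for x
    using C[OF that] by (smt (verit) mult_nonneg_nonneg norm_ge_zero powr_ge_zero abs_ge_zero)+
  have unweight: "b \<le> max C 0 * r powr (-c)" if "0 < r" "r powr c * b \<le> max C 0" for r b c :: real
  proof -
    have "b = r powr (-c) * (r powr c * b)"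
      using \<open>0 < r\<close> by (simp add: mult.assoc[symmetric] powr_add[symmetric])
    also have "\<dots> \<le> r powr (-c) * max C 0"
      using that(2) by (intro mult_left_mono) auto
    finally show ?thesis
      by (simp add: mult.commute)
  qed
  have "0 < norm x" if "x \<in> punct R" for x :: 'a
    using that by (simp add: punct_def)
  then show ?thesis
    using that[of "max C 0"] unweight weighted unweight[where c = "\<sigma> + 1"] by force
qed

lemma Lcoef_bounds:
  assumes "0 \<le> t" "0 < \<beta>" "0 < p"
  shows "0 \<le> Lcoef p \<xi> \<beta> t x" "Lcoef p \<xi> \<beta> t x \<le> p / \<beta>"
proof -
  have "0 \<le> Lcoef p \<xi> \<beta> t x \<and> Lcoef p \<xi> \<beta> t x \<le> p / \<beta>"
  proof (cases t)
    case (real s)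
    then have "\<beta> \<le> s * norm x powr (\<xi> - 1) + \<beta>"
      using assms(1) by simp
    then show ?thesis
      using real assms by (simp add: Lcoef_def frac_le)
  qed (use assms in \<open>simp_all add: Lcoef_def\<close>)
  then show "0 \<le> Lcoef p \<xi> \<beta> t x" "Lcoef p \<xi> \<beta> t x \<le> p / \<beta>"
    by simp_all
qed

lemma Lcoef_eq_if_norm_eq: "norm x = norm y \<Longrightarrow> Lcoef p \<xi> \<beta> t x = Lcoef p \<xi> \<beta> t y"
  by (cases t) (simp_all add: Lcoef_def)


section \<open>Part (b): the operator \<open>L\<^sup>-\<close>\<close>

lemma Lminus_no_interior_max_below_barrier:
  fixes \<phi> :: "'a::euclidean_space \<Rightarrow> real"
  assumes a: "0 < a" "a < real DIM('a) - 2" and c: "0 \<le> Lcoef p \<xi> \<beta> t x0" and \<epsilon>: "0 < \<epsilon>"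
    and D: "open D" "D \<subseteq> punct R" "x0 \<in> D" and C2: "C2_on (punct R) \<phi>"
    and eq: "Lminus p \<xi> \<beta> t \<phi> x0 = 0"
    and max: "\<And>x. x \<in> D \<Longrightarrow>
      sg * \<phi> x - \<epsilon> * norm x powr (-a) \<le> sg * \<phi> x0 - \<epsilon> * norm x0 powr (-a)"
  shows False
proof -
  define m where "m = - a / 2"
  define q where "q = x0 \<bullet> x0"
  define P where "P = q powr (m - 1)"
  define N where "N = real DIM('a)"
  have nz: "x \<noteq> 0" if "x \<in> D" for x
    using that D(2) by (auto simp: punct_def)
  have q: "0 < q" "q powr m = P * q"
    using nz[OF D(3)] by (simp_all add: q_def P_def powr_diff)
  have "x \<in> D \<Longrightarrow> barrier 1 0 m x = norm x powr (-a)" for x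
    using inner_self_powr[OF nz, of x m] by (simp add: barrier_def m_def)
  then have max': "x \<in> D \<Longrightarrow>
      sg * \<phi> x - \<epsilon> * barrier 1 0 m x \<le> sg * \<phi> x0 - \<epsilon> * barrier 1 0 m x0" for x
    using max D(3) by simp
  have d1: "((\<lambda>s. sg * \<phi> (x0 + s *\<^sub>R v)) has_real_derivative sg * (v \<bullet> grad \<phi> (x0 + s *\<^sub>R v))) (at s)"
    if "x0 + s *\<^sub>R v \<in> D" for v s
    using that D(2) C2_on_differentiable(1)[OF C2] by (intro DERIV_cmult DERIV_along_line) auto
  have d2: "((\<lambda>s. sg * (v \<bullet> grad \<phi> (x0 + s *\<^sub>R v))) has_real_derivative
      sg * hessian_form \<phi> x0 v) (at 0)" for v
    using D C2_on_differentiable(2)[OF C2] by (intro DERIV_cmult DERIV_grad_along_line) auto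
  have "0 \<notin> D"
    using nz by blast
  from max_below_barrier_conditions[OF D(1,3) this max' d1 d2]
  have "sg * (x0 \<bullet> grad \<phi> x0) = \<epsilon> * barrier_deriv 1 0 m x0 x0"
    "(\<Sum>i\<in>Basis. sg * hessian_form \<phi> x0 i) \<le> \<epsilon> * (\<Sum>i\<in>Basis. barrier_deriv2 1 0 m x0 i)"
    by simp_all
  then have grad: "sg * (x0 \<bullet> grad \<phi> x0) = \<epsilon> * (P * q * (2 * m))"
    and lapl: "sg * laplacian \<phi> x0 \<le> \<epsilon> * (P * (4 * m * (m - 1) + 2 * m * N))"
    using q nz[OF D(3)]
    by (simp_all add: barrier_deriv_radial sum_barrier_deriv2_Basis N_def P_def q_def
        flip: sum_distrib_left sum_hessian_form_Basis)
  have "laplacian \<phi> x0 = - Lcoef p \<xi> \<beta> t x0 / q * (x0 \<bullet> grad \<phi> x0)"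
    using eq q by (simp add: Lminus_def q_def power2_norm_eq_inner field_simps)
  then have "sg * laplacian \<phi> x0 = - Lcoef p \<xi> \<beta> t x0 / q * (sg * (x0 \<bullet> grad \<phi> x0))"
    by simp
  also have "\<dots> = - Lcoef p \<xi> \<beta> t x0 * \<epsilon> * P * (2 * m)"
    unfolding grad using q by simp
  finally have "- Lcoef p \<xi> \<beta> t x0 * \<epsilon> * P * (2 * m) \<le> \<epsilon> * (P * (4 * m * (m - 1) + 2 * m * N))"
    using lapl by simp
  then have "\<epsilon> * P * (a * (Lcoef p \<xi> \<beta> t x0 + N - 2 - a)) \<le> 0"
    by (simp add: m_def algebra_simps)
  moreover have "0 < \<epsilon> * P * (a * (Lcoef p \<xi> \<beta> t x0 + N - 2 - a))"
    using \<epsilon> q a c by (simp add: P_def N_def)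
  ultimately show False
    by simp
qed

lemma Lminus_solution_nonpos:
  fixes \<phi> :: "'a::euclidean_space \<Rightarrow> real"
  assumes \<sigma>: "0 < \<sigma>" "\<sigma> < real DIM('a) - 2" and c: "\<And>x::'a. 0 \<le> Lcoef p \<xi> \<beta> t x"
    and C2: "C2_on (punct R) \<phi>" and X: "inX \<sigma> R \<phi>"
    and eq: "\<forall>x\<in>punct R. Lminus p \<xi> \<beta> t \<phi> x = 0"
    and bd: "R \<noteq> \<infinity> \<longrightarrow> zero_bdry R \<phi>"
    and sg: "\<bar>sg\<bar> = 1" and x1: "x1 \<in> punct R"
  shows "sg * \<phi> x1 \<le> 0"
proof (rule ccontr)
  assume "\<not> sg * \<phi> x1 \<le> 0"
  define a where "a = (\<sigma> + real DIM('a) - 2) / 2"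
  define \<epsilon> where "\<epsilon> = sg * \<phi> x1 / (2 * norm x1 powr (-a))"
  have a: "\<sigma> < a" "a < real DIM('a) - 2"
    using \<sigma>(2) by (simp_all add: a_def)
  have \<epsilon>: "0 < \<epsilon>" "0 < sg * \<phi> x1 - \<epsilon> * norm x1 powr (-a)"
    using \<open>\<not> sg * \<phi> x1 \<le> 0\<close> x1 by (simp_all add: \<epsilon>_def punct_def)
  obtain C where C: "\<And>x. x \<in> punct R \<Longrightarrow> \<bar>\<phi> x\<bar> \<le> C * norm x powr (-\<sigma>)"
    using inX_decay_bounds[OF X] by metis
  have le_abs: "sg * \<phi> x \<le> \<bar>\<phi> x\<bar>" for x
    using abs_ge_self[of "sg * \<phi> x"] sg by (simp add: abs_mult)
  have decay: "sg * \<phi> x \<le> C * norm x powr (-\<sigma>)" if "x \<in> punct R" for x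
    using le_abs[of x] C[OF that] by linarith
  have sphere: "\<exists>d>0. \<forall>x\<in>punct R. dist x z < d \<longrightarrow> sg * \<phi> x < \<eta>"
    if z: "ereal (norm z) = R" and \<eta>: "0 < \<eta>" for z \<eta>
  proof -
    have "zero_bdry R \<phi>"
      using bd z by auto
    then obtain d where "0 < d" "\<And>x. x \<in> punct R \<Longrightarrow> dist x z < d \<Longrightarrow> \<bar>\<phi> x\<bar> < \<eta>"
      using zero_bdry_small_near[OF _ z \<eta>] by blast
    then show ?thesis
      using le_abs le_less_trans by blast
  qed
  have "continuous_on (punct R) (\<lambda>x. sg * \<phi> x)"
    using C2_on_imp_continuous_on[OF C2] by (intro continuous_intros)
  from exists_max_below_radial_barrier[OF \<sigma>(1) a(1) \<epsilon>(1) this decay sphere x1 \<epsilon>(2)]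
  obtain x0 where x0: "x0 \<in> punct R" "\<And>x. x \<in> punct R \<Longrightarrow>
      sg * \<phi> x - \<epsilon> * norm x powr (-a) \<le> sg * \<phi> x0 - \<epsilon> * norm x0 powr (-a)"
    by blast
  have "0 < a"
    using \<sigma>(1) a(1) by simp
  from Lminus_no_interior_max_below_barrier[OF this a(2) c \<epsilon>(1) open_punct subset_refl x0(1) C2 _ x0(2)]
  show False
    using eq x0(1) by blast
qed

lemma Lminus_solution_eq_zero:
  fixes \<phi> :: "'a::euclidean_space \<Rightarrow> real"
  assumes \<sigma>: "0 < \<sigma>" "\<sigma> < real DIM('a) - 2" and c: "\<And>x::'a. 0 \<le> Lcoef p \<xi> \<beta> t x"
    and C2: "C2_on (punct R) \<phi>" and X: "inX \<sigma> R \<phi>"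
    and eq: "\<forall>x\<in>punct R. Lminus p \<xi> \<beta> t \<phi> x = 0"
    and bd: "R \<noteq> \<infinity> \<longrightarrow> zero_bdry R \<phi>" and x: "x \<in> punct R"
  shows "\<phi> x = 0"
  using Lminus_solution_nonpos[OF \<sigma> c C2 X eq bd _ x, of 1]
    Lminus_solution_nonpos[OF \<sigma> c C2 X eq bd _ x, of "-1"]
  by simp


section \<open>Part (a): the operator \<open>L\<^sup>+\<close>\<close>

lemma norm_segment_to_reflection:
  fixes x e :: "'a::real_inner"
  assumes e: "norm e = 1" and x: "0 \<le> x \<bullet> e" "2 * (x \<bullet> e) \<le> norm x" and \<tau>: "0 \<le> \<tau>" "\<tau> \<le> 2"
  shows "norm x / 2 \<le> norm (x - (\<tau> * (x \<bullet> e)) *\<^sub>R e) \<and> norm (x - (\<tau> * (x \<bullet> e)) *\<^sub>R e) \<le> norm x"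
proof -
  define \<alpha> where "\<alpha> = x \<bullet> e"
  define r where "r = norm x"
  have "x \<bullet> x = r\<^sup>2" "e \<bullet> e = 1"
    using e by (simp_all add: r_def flip: power2_norm_eq_inner)
  then have y: "(x - (\<tau> * \<alpha>) *\<^sub>R e) \<bullet> (x - (\<tau> * \<alpha>) *\<^sub>R e) = r\<^sup>2 - \<alpha>\<^sup>2 * (\<tau> * (2 - \<tau>))"
    by (simp add: \<alpha>_def inner_diff_left inner_diff_right inner_commute power2_eq_square algebra_simps)
  have "0 \<le> \<tau> * (2 - \<tau>)"
    using \<tau> by simp
  moreover have "\<tau> * (2 - \<tau>) \<le> 1"
    using zero_le_power2[of "\<tau> - 1"] by (simp add: power2_eq_square algebra_simps)
  ultimately have "0 \<le> \<alpha>\<^sup>2 * (\<tau> * (2 - \<tau>))" "\<alpha>\<^sup>2 * (\<tau> * (2 - \<tau>)) \<le> \<alpha>\<^sup>2"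
    by (simp_all add: mult_left_le)
  moreover have "\<alpha>\<^sup>2 \<le> (r / 2)\<^sup>2"
    using x by (intro power_mono) (simp_all add: \<alpha>_def r_def)
  ultimately have "(r / 2)\<^sup>2 \<le> (norm (x - (\<tau> * \<alpha>) *\<^sub>R e))\<^sup>2" "(norm (x - (\<tau> * \<alpha>) *\<^sub>R e))\<^sup>2 \<le> r\<^sup>2"
    unfolding power2_norm_eq_inner y using zero_le_power2[of r] by (auto simp: power_divide)
  then show ?thesis
    unfolding \<alpha>_def r_def by (auto intro: power2_le_imp_le)
qed

text \<open>The mean value theorem on the segment from \<open>x\<close> to its mirror image, of length
  \<open>2 (x \<bullet> e)\<close>, produces the factor \<open>x \<bullet> e\<close>.\<close>

lemma reflection_difference_bound_near_plane:
  fixes \<phi> :: "'a::euclidean_space \<Rightarrow> real"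
  assumes e: "norm e = 1" and \<sigma>: "0 < \<sigma>" and C: "0 \<le> C"
    and grad: "\<And>x. x \<in> punct R \<Longrightarrow> norm (grad \<phi> x) \<le> C * norm x powr (-\<sigma> - 1)"
    and diff: "\<And>x. x \<in> punct R \<Longrightarrow> \<phi> differentiable at x"
    and x: "x \<in> punct R" "0 < x \<bullet> e" "2 * (x \<bullet> e) < norm x"
  shows "\<bar>\<phi> x - \<phi> (reflect e x)\<bar> \<le> 2 * 2 powr (\<sigma> + 1) * C * (x \<bullet> e) * norm x powr (-\<sigma> - 1)"
proof -
  define \<alpha> where "\<alpha> = x \<bullet> e"
  define r where "r = norm x"
  define y where "y \<tau> = x + \<tau> *\<^sub>R (- \<alpha> *\<^sub>R e)" for \<tau>
  have r: "0 < r"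
    using x by (simp add: r_def punct_def)
  have y_norm: "r / 2 \<le> norm (y \<tau>) \<and> norm (y \<tau>) \<le> r" if "0 \<le> \<tau>" "\<tau> \<le> 2" for \<tau>
    using norm_segment_to_reflection[OF e _ _ that] x by (simp add: y_def \<alpha>_def r_def)
  have y_punct: "y \<tau> \<in> punct R" if "0 \<le> \<tau>" "\<tau> \<le> 2" for \<tau>
  proof -
    have "ereal (norm (y \<tau>)) \<le> ereal (norm x)"
      using y_norm[OF that] by (simp add: r_def)
    also have "\<dots> < R"
      using x by (simp add: punct_def)
    finally have "ereal (norm (y \<tau>)) < R" .
    moreover have "0 < norm (y \<tau>)"
      using y_norm[OF that] r by linarith
    ultimately show ?thesis
      unfolding punct_def by simp
  qed
  have "((\<lambda>\<tau>. \<phi> (y \<tau>)) has_real_derivative (- \<alpha> *\<^sub>R e) \<bullet> grad \<phi> (y \<tau>)) (at \<tau>)"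
    if "0 \<le> \<tau>" "\<tau> \<le> 2" for \<tau>
    using diff[OF y_punct[OF that]] unfolding y_def by (rule DERIV_along_line)
  from MVT2[of 0 2, OF _ this] obtain z where z: "0 < z" "z < 2"
    "\<phi> (y 2) - \<phi> (y 0) = 2 * ((- \<alpha> *\<^sub>R e) \<bullet> grad \<phi> (y z))"
    by auto
  have "norm (y z) powr (-\<sigma> - 1) \<le> (r / 2) powr (-\<sigma> - 1)"
    using y_norm[of z] z r \<sigma> by (intro powr_mono2') auto
  also have "\<dots> = 2 powr (\<sigma> + 1) * r powr (-\<sigma> - 1)"
    using r by (simp add: powr_divide powr_minus_divide divide_simps powr_add powr_diff)
  finally have grad_z: "norm (grad \<phi> (y z)) \<le> C * (2 powr (\<sigma> + 1) * r powr (-\<sigma> - 1))"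
    using grad[OF y_punct[of z]] z C by (meson less_eq_real_def mult_left_mono order.trans)
  have "y 2 = reflect e x" "y 0 = x"
    by (simp_all add: y_def reflect_def \<alpha>_def)
  then have "\<bar>\<phi> x - \<phi> (reflect e x)\<bar> = 2 * \<bar>(- \<alpha> *\<^sub>R e) \<bullet> grad \<phi> (y z)\<bar>"
    using z(3) by simp
  also have "\<dots> \<le> 2 * (\<alpha> * norm (grad \<phi> (y z)))"
    using Cauchy_Schwarz_ineq2[of "- \<alpha> *\<^sub>R e" "grad \<phi> (y z)"] e x(2) by (simp add: \<alpha>_def)
  also have "\<dots> \<le> 2 * (\<alpha> * (C * (2 powr (\<sigma> + 1) * r powr (-\<sigma> - 1))))"
    using grad_z x(2) by (simp add: \<alpha>_def)
  finally show ?thesis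
    by (simp add: \<alpha>_def r_def algebra_simps)
qed

lemma reflection_difference_bound:
  fixes \<phi> :: "'a::euclidean_space \<Rightarrow> real"
  assumes e: "norm e = 1" and \<sigma>: "0 < \<sigma>" and C: "0 \<le> C"
    and \<phi>: "\<And>x. x \<in> punct R \<Longrightarrow> \<bar>\<phi> x\<bar> \<le> C * norm x powr (-\<sigma>)"
    and grad: "\<And>x. x \<in> punct R \<Longrightarrow> norm (grad \<phi> x) \<le> C * norm x powr (-\<sigma> - 1)"
    and diff: "\<And>x. x \<in> punct R \<Longrightarrow> \<phi> differentiable at x"
    and x: "x \<in> punct R" "0 < x \<bullet> e"
  shows "\<bar>\<phi> x - \<phi> (reflect e x)\<bar>
    \<le> (4 + 2 * 2 powr (\<sigma> + 1)) * C * (x \<bullet> e) * norm x powr (-\<sigma> - 1)"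
proof (cases "2 * (x \<bullet> e) < norm x")
  case True
  have "0 \<le> 4 * C * (x \<bullet> e) * norm x powr (-\<sigma> - 1)"
    using C x(2) by simp
  then show ?thesis
    using reflection_difference_bound_near_plane[OF e \<sigma> C grad diff x True]
    unfolding distrib_right by linarith
next
  case False
  have r: "0 < norm x"
    using x by (simp add: punct_def)
  have "\<bar>\<phi> x - \<phi> (reflect e x)\<bar> \<le> C * norm x powr (-\<sigma>) + C * norm x powr (-\<sigma>)"
    using \<phi>[OF x(1)] \<phi>[OF reflect_in_punct[OF e x(1)]] by (simp add: norm_reflect[OF e])
  also have "\<dots> = 2 * C * norm x * norm x powr (-\<sigma> - 1)"
    using r by (simp add: powr_diff powr_minus divide_simps)
  also have "\<dots> \<le> 4 * C * (x \<bullet> e) * norm x powr (-\<sigma> - 1)"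
    using mult_left_mono[of "norm x" "2 * (x \<bullet> e)" C] False C by (intro mult_right_mono) auto
  also have "\<dots> \<le> (4 + 2 * 2 powr (\<sigma> + 1)) * C * (x \<bullet> e) * norm x powr (-\<sigma> - 1)"
    using C x(2) by (intro mult_right_mono) (auto intro!: mult_right_mono)
  finally show ?thesis .
qed

lemma reflection_difference_max_below_barrier_conditions:
  fixes \<phi> :: "'a::euclidean_space \<Rightarrow> real"
  assumes e: "norm e = 1" and D: "open D" "D \<subseteq> punct R" "x0 \<in> D" and C2: "C2_on (punct R) \<phi>"
    and max: "\<And>x. x \<in> D \<Longrightarrow> sg * (\<phi> x - \<phi> (reflect e x)) - \<epsilon> * barrier k e' m x
      \<le> sg * (\<phi> x0 - \<phi> (reflect e x0)) - \<epsilon> * barrier k e' m x0"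
  shows "sg * (x0 \<bullet> grad \<phi> x0 - reflect e x0 \<bullet> grad \<phi> (reflect e x0)) = \<epsilon> * barrier_deriv k e' m x0 x0"
    and "sg * (laplacian \<phi> x0 - laplacian \<phi> (reflect e x0))
      \<le> \<epsilon> * (\<Sum>i\<in>Basis. barrier_deriv2 k e' m x0 i)"
proof -
  have punct: "y \<in> punct R" "reflect e y \<in> punct R" if "y \<in> D" for y
    using that D(2) reflect_in_punct[OF e] by auto
  have d1: "((\<lambda>s. sg * (\<phi> (x0 + s *\<^sub>R v) - \<phi> (reflect e (x0 + s *\<^sub>R v)))) has_real_derivative
      sg * (v \<bullet> grad \<phi> (x0 + s *\<^sub>R v) - reflect e v \<bullet> grad \<phi> (reflect e x0 + s *\<^sub>R reflect e v)))
      (at s)" if "x0 + s *\<^sub>R v \<in> D" for v s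
    using C2_on_differentiable(1)[OF C2] punct[OF that]
    by (intro DERIV_cmult DERIV_diff DERIV_along_line DERIV_reflect_along_line)
      (auto simp: reflect_add_scaleR)
  have d2: "((\<lambda>s. sg * (v \<bullet> grad \<phi> (x0 + s *\<^sub>R v)
        - reflect e v \<bullet> grad \<phi> (reflect e x0 + s *\<^sub>R reflect e v))) has_real_derivative
      sg * (hessian_form \<phi> x0 v - hessian_form \<phi> (reflect e x0) (reflect e v))) (at 0)" for v
    using C2_on_differentiable(2)[OF C2] punct[OF D(3)]
    by (intro DERIV_cmult DERIV_diff DERIV_grad_along_line) auto
  have "0 \<notin> D"
    using D(2) by (auto simp: punct_def)
  from max_below_barrier_conditions[OF D(1,3) this max d1 d2]
  show "sg * (x0 \<bullet> grad \<phi> x0 - reflect e x0 \<bullet> grad \<phi> (reflect e x0))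
      = \<epsilon> * barrier_deriv k e' m x0 x0"
    and "sg * (laplacian \<phi> x0 - laplacian \<phi> (reflect e x0))
      \<le> \<epsilon> * (\<Sum>i\<in>Basis. barrier_deriv2 k e' m x0 i)"
    using e by (simp_all add: reflect_reflect sum_subtractf sum_hessian_form_Basis
        sum_hessian_form_reflect_Basis flip: sum_distrib_left)
qed

lemma Lplus_reflection_no_interior_max_below_barrier:
  fixes \<phi> :: "'a::euclidean_space \<Rightarrow> real"
  assumes c: "0 < b * (real DIM('a) - b) - Lcoef p \<xi> \<beta> t x0 * (b - 1)" and \<epsilon>: "0 < \<epsilon>"
    and e: "norm e = 1" and x0e: "0 < x0 \<bullet> e"
    and D: "open D" "D \<subseteq> punct R" "x0 \<in> D" and C2: "C2_on (punct R) \<phi>"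
    and eq: "Lplus p \<xi> \<beta> t \<phi> x0 = 0" "Lplus p \<xi> \<beta> t \<phi> (reflect e x0) = 0"
    and max: "\<And>x. x \<in> D \<Longrightarrow>
      sg * (\<phi> x - \<phi> (reflect e x)) - \<epsilon> * ((x \<bullet> e) * norm x powr (-b))
        \<le> sg * (\<phi> x0 - \<phi> (reflect e x0)) - \<epsilon> * ((x0 \<bullet> e) * norm x0 powr (-b))"
  shows False
proof -
  define m where "m = - b / 2"
  define q where "q = x0 \<bullet> x0"
  define P where "P = q powr (m - 1)"
  define N where "N = real DIM('a)"
  define c where "c = Lcoef p \<xi> \<beta> t x0"
  define x0' where "x0' = reflect e x0"
  have nz: "x \<noteq> 0" if "x \<in> D" for x
    using that D(2) by (auto simp: punct_def)
  have q: "0 < q" "q powr m = P * q"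
    using nz[OF D(3)] by (simp_all add: q_def P_def powr_diff)
  have "x \<in> D \<Longrightarrow> barrier 0 e m x = (x \<bullet> e) * norm x powr (-b)" for x
    using inner_self_powr[OF nz, of x m] by (simp add: barrier_def m_def)
  then have "x \<in> D \<Longrightarrow> sg * (\<phi> x - \<phi> (reflect e x)) - \<epsilon> * barrier 0 e m x
      \<le> sg * (\<phi> x0 - \<phi> (reflect e x0)) - \<epsilon> * barrier 0 e m x0" for x
    using max D(3) by simp
  note conditions = reflection_difference_max_below_barrier_conditions[OF e D C2 this, folded x0'_def]
  have grad: "sg * (x0 \<bullet> grad \<phi> x0 - x0' \<bullet> grad \<phi> x0') = \<epsilon> * P * q * (x0 \<bullet> e) * (1 + 2 * m)"
    and lapl: "sg * (laplacian \<phi> x0 - laplacian \<phi> x0')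
      \<le> \<epsilon> * (P * (4 * m * (x0 \<bullet> e) + (x0 \<bullet> e) * (4 * m * (m - 1) + 2 * m * N)))"
    using conditions q nz[OF D(3)]
    by (simp_all add: barrier_deriv_radial sum_barrier_deriv2_Basis N_def P_def q_def algebra_simps)
  have "norm x0' = norm x0" "x0' \<bullet> x0' = q"
    using e by (simp_all add: x0'_def q_def norm_reflect inner_reflect_reflect)
  then have "laplacian \<phi> x0 = c / q * (x0 \<bullet> grad \<phi> x0)" "laplacian \<phi> x0' = c / q * (x0' \<bullet> grad \<phi> x0')"
    using eq q Lcoef_eq_if_norm_eq[of x0' x0]
    by (simp_all add: Lplus_def c_def q_def x0'_def power2_norm_eq_inner field_simps)
  then have "sg * (laplacian \<phi> x0 - laplacian \<phi> x0') = c / q * (sg * (x0 \<bullet> grad \<phi> x0 - x0' \<bullet> grad \<phi> x0'))"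
    by (simp add: algebra_simps)
  also have "\<dots> = c * \<epsilon> * P * (x0 \<bullet> e) * (1 + 2 * m)"
    unfolding grad using q by simp
  finally have "c * \<epsilon> * P * (x0 \<bullet> e) * (1 + 2 * m)
      \<le> \<epsilon> * (P * (4 * m * (x0 \<bullet> e) + (x0 \<bullet> e) * (4 * m * (m - 1) + 2 * m * N)))"
    using lapl by simp
  then have "\<epsilon> * P * (x0 \<bullet> e) * (b * (N - b) - c * (b - 1)) \<le> 0"
    by (simp add: m_def algebra_simps)
  moreover have "0 < \<epsilon> * P * (x0 \<bullet> e) * (b * (N - b) - c * (b - 1))"
    using \<epsilon> q x0e c by (simp add: P_def N_def c_def)
  ultimately show False
    by simp
qed

lemma zero_bdry_reflection_difference_small_near:
  assumes "zero_bdry R \<phi>" "norm e = 1" "ereal (norm z) = R" "0 < \<eta>"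
  obtains d where "0 < d"
    "\<And>x. x \<in> punct R \<Longrightarrow> dist x z < d \<Longrightarrow> \<bar>\<phi> x - \<phi> (reflect e x)\<bar> < \<eta>"
proof -
  have "0 < \<eta> / 2" "ereal (norm (reflect e z)) = R"
    using assms by (simp_all add: norm_reflect)
  then obtain d1 d2 where "0 < d1" "\<And>x. x \<in> punct R \<Longrightarrow> dist x z < d1 \<Longrightarrow> \<bar>\<phi> x\<bar> < \<eta> / 2"
    and "0 < d2" "\<And>x. x \<in> punct R \<Longrightarrow> dist x (reflect e z) < d2 \<Longrightarrow> \<bar>\<phi> x\<bar> < \<eta> / 2"
    using zero_bdry_small_near[OF assms(1)] assms(3) by metis
  moreover have "dist (reflect e x) (reflect e z) = dist x z" for x
    using assms(2) by (rule dist_reflect)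
  ultimately show ?thesis
    using that[of "min d1 d2"] reflect_in_punct[OF assms(2)] by fastforce
qed

lemma inX_reflection_difference_bounds:
  fixes \<phi> :: "'a::euclidean_space \<Rightarrow> real"
  assumes e: "norm e = 1" and \<sigma>: "0 < \<sigma>" and C2: "C2_on (punct R) \<phi>" and X: "inX \<sigma> R \<phi>"
  obtains K where "0 \<le> K"
    "\<And>x. x \<in> punct R \<Longrightarrow> \<bar>\<phi> x - \<phi> (reflect e x)\<bar> \<le> K * norm x powr (-\<sigma>)"
    "\<And>x. x \<in> punct R \<Longrightarrow> 0 < x \<bullet> e \<Longrightarrow>
      \<bar>\<phi> x - \<phi> (reflect e x)\<bar> \<le> K * (x \<bullet> e) * norm x powr (-\<sigma> - 1)"
proof -
  obtain C where C: "0 \<le> C" "\<And>x. x \<in> punct R \<Longrightarrow> \<bar>\<phi> x\<bar> \<le> C * norm x powr (-\<sigma>)"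
    "\<And>x. x \<in> punct R \<Longrightarrow> norm (grad \<phi> x) \<le> C * norm x powr (-\<sigma> - 1)"
    using inX_decay_bounds[OF X] by metis
  define K where "K = (4 + 2 * 2 powr (\<sigma> + 1)) * C"
  have far: "\<bar>\<phi> x - \<phi> (reflect e x)\<bar> \<le> 2 * C * norm x powr (-\<sigma>)" if "x \<in> punct R" for x
    using C(2)[OF that] C(2)[OF reflect_in_punct[OF e that]] abs_triangle_ineq4[of "\<phi> x"]
    by (simp add: norm_reflect[OF e])
  have "2 * C \<le> K"
    unfolding K_def using C(1) powr_ge_zero[of 2 "\<sigma> + 1"] by (intro mult_right_mono) auto
  then have "2 * C * norm x powr (-\<sigma>) \<le> K * norm x powr (-\<sigma>)" for x :: 'a
    by (intro mult_right_mono) auto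
  show ?thesis
  proof (rule that[of K])
    show "0 \<le> K"
      using \<open>2 * C \<le> K\<close> C(1) by linarith
    show "\<bar>\<phi> x - \<phi> (reflect e x)\<bar> \<le> K * norm x powr (-\<sigma>)" if "x \<in> punct R" for x
      using far[OF that] \<open>2 * C * norm x powr (-\<sigma>) \<le> K * norm x powr (-\<sigma>)\<close> by linarith
    show "\<bar>\<phi> x - \<phi> (reflect e x)\<bar> \<le> K * (x \<bullet> e) * norm x powr (-\<sigma> - 1)"
      if "x \<in> punct R" "0 < x \<bullet> e" for x
      using reflection_difference_bound[OF e \<sigma> C C2_on_differentiable(1)[OF C2] that]
      by (simp add: K_def)
  qed
qed

lemma Lplus_reflection_difference_nonpos:
  fixes \<phi> :: "'a::euclidean_space \<Rightarrow> real"
  assumes \<sigma>: "0 < \<sigma>" and b: "\<sigma> + 1 < b"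
    and c: "\<And>x::'a. 0 < b * (real DIM('a) - b) - Lcoef p \<xi> \<beta> t x * (b - 1)"
    and C2: "C2_on (punct R) \<phi>" and X: "inX \<sigma> R \<phi>"
    and eq: "\<forall>x\<in>punct R. Lplus p \<xi> \<beta> t \<phi> x = 0"
    and bd: "R \<noteq> \<infinity> \<longrightarrow> zero_bdry R \<phi>"
    and sg: "\<bar>sg\<bar> = 1" and e: "norm e = 1" and x1: "x1 \<in> punct R" "0 < x1 \<bullet> e"
  shows "sg * (\<phi> x1 - \<phi> (reflect e x1)) \<le> 0"
proof (rule ccontr)
  define w where "w x = sg * (\<phi> x - \<phi> (reflect e x))" for x
  define D where "D = punct R \<inter> {x. 0 < x \<bullet> e}"
  define \<epsilon> where "\<epsilon> = w x1 / (2 * ((x1 \<bullet> e) * norm x1 powr (-b)))"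
  assume "\<not> sg * (\<phi> x1 - \<phi> (reflect e x1)) \<le> 0"
  then have \<epsilon>: "0 < \<epsilon>" "0 < w x1 - \<epsilon> * ((x1 \<bullet> e) * norm x1 powr (-b))"
    using x1 by (simp_all add: w_def \<epsilon>_def punct_def)
  have D: "open D" "D \<subseteq> punct R" "x1 \<in> D"
    using x1 by (auto simp: D_def intro!: open_Int open_punct open_Collect_less continuous_intros)
  have le_abs: "w x \<le> \<bar>\<phi> x - \<phi> (reflect e x)\<bar>" for x
    using abs_ge_self[of "w x"] sg by (simp add: w_def abs_mult)
  obtain K where K: "\<And>x. x \<in> punct R \<Longrightarrow> \<bar>\<phi> x - \<phi> (reflect e x)\<bar> \<le> K * norm x powr (-\<sigma>)"
    "\<And>x. x \<in> punct R \<Longrightarrow> 0 < x \<bullet> e \<Longrightarrow>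
      \<bar>\<phi> x - \<phi> (reflect e x)\<bar> \<le> K * (x \<bullet> e) * norm x powr (-\<sigma> - 1)"
    using inX_reflection_difference_bounds[OF e \<sigma> C2 X] by metis
  have decay: "w x \<le> K * norm x powr (-\<sigma>)" "w x \<le> K * (x \<bullet> e) * norm x powr (-\<sigma> - 1)"
    if "x \<in> D" for x
    using le_abs[of x] K that by (fastforce simp: D_def intro: order.trans)+
  have sphere: "\<exists>d>0. \<forall>x\<in>D. dist x z < d \<longrightarrow> w x < \<eta>"
    if z: "ereal (norm z) = R" and \<eta>: "0 < \<eta>" for z \<eta>
  proof -
    have "zero_bdry R \<phi>"
      using bd z by auto
    then obtain d where "0 < d"
      "\<And>x. x \<in> punct R \<Longrightarrow> dist x z < d \<Longrightarrow> \<bar>\<phi> x - \<phi> (reflect e x)\<bar> < \<eta>"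
      using zero_bdry_reflection_difference_small_near[OF _ e z \<eta>] by blast
    then show ?thesis
      using D(2) le_abs le_less_trans by blast
  qed
  have "continuous_on D w"
    unfolding w_def using D(2) reflect_in_punct[OF e] C2_on_differentiable(1)[OF C2]
    by (intro continuous_at_imp_continuous_on ballI continuous_intros isCont_o2[OF isCont_reflect]
        differentiable_imp_continuous_within) auto
  from exists_max_below_halfspace_barrier[OF \<sigma> b \<epsilon>(1) this[unfolded D_def],
      folded D_def, OF decay sphere D(3) \<epsilon>(2)]
  obtain x0 where x0: "x0 \<in> D" "\<And>x. x \<in> D \<Longrightarrow>
    w x - \<epsilon> * ((x \<bullet> e) * norm x powr (-b)) \<le> w x0 - \<epsilon> * ((x0 \<bullet> e) * norm x0 powr (-b))"
    by blast
  from x0(1) have x0': "x0 \<in> punct R" "0 < x0 \<bullet> e" "reflect e x0 \<in> punct R"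
    using reflect_in_punct[OF e] by (simp_all add: D_def)
  show False
    by (rule Lplus_reflection_no_interior_max_below_barrier[where sg = sg,
          OF c \<epsilon>(1) e x0'(2) D(1,2) x0(1) C2])
      (use eq x0' x0(2) in \<open>simp_all add: w_def\<close>)
qed

lemma Lplus_solution_reflection_invariant:
  fixes \<phi> :: "'a::euclidean_space \<Rightarrow> real"
  assumes \<sigma>: "0 < \<sigma>" and b: "\<sigma> + 1 < b"
    and c: "\<And>x::'a. 0 < b * (real DIM('a) - b) - Lcoef p \<xi> \<beta> t x * (b - 1)"
    and C2: "C2_on (punct R) \<phi>" and X: "inX \<sigma> R \<phi>"
    and eq: "\<forall>x\<in>punct R. Lplus p \<xi> \<beta> t \<phi> x = 0"
    and bd: "R \<noteq> \<infinity> \<longrightarrow> zero_bdry R \<phi>"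
    and e: "norm e = 1" and x: "x \<in> punct R"
  shows "\<phi> (reflect e x) = \<phi> x"
proof -
  have halfspace: "\<phi> (reflect e' x) = \<phi> x" if "norm e' = 1" "0 < x \<bullet> e'" for e'
    using Lplus_reflection_difference_nonpos[OF \<sigma> b c C2 X eq bd, of 1 e' x]
      Lplus_reflection_difference_nonpos[OF \<sigma> b c C2 X eq bd, of "-1" e' x] that x
    by simp
  consider "0 < x \<bullet> e" | "x \<bullet> e < 0" | "x \<bullet> e = 0"
    by linarith
  then show ?thesis
  proof cases
    case 1
    then show ?thesis
      using halfspace[OF e] by simp
  next
    case 2
    then show ?thesis
      using halfspace[of "- e"] e by (simp add: reflect_uminus)
  next
    case 3
    then show ?thesis
      by (simp add: reflect_fixed)
  qed
qed

lemma radial_mean_zero_imp_zero: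
  fixes \<phi> :: "'a::euclidean_space \<Rightarrow> real"
  assumes radial: "\<And>y. norm y = norm x \<Longrightarrow> \<phi> y = \<phi> x"
    and mean: "\<forall>r. 0 < r \<and> ereal r < R \<longrightarrow> sphere_integral (\<lambda>\<theta>. \<phi> (r *\<^sub>R \<theta>)) = 0"
    and x: "x \<in> punct R"
  shows "\<phi> x = 0"
proof -
  define r where "r = norm x"
  have r: "0 < r" "ereal r < R"
    using x by (auto simp: r_def punct_def)
  have "integral (ball 0 1) (\<lambda>z::'a. \<phi> (r *\<^sub>R (z /\<^sub>R norm z))) = integral (ball 0 1) (\<lambda>z::'a. \<phi> x * 1)"
  proof (rule integral_spike[OF negligible_sing[of 0]])
    fix z :: 'a
    assume "z \<in> ball 0 1 - {0}"
    then have "norm (r *\<^sub>R (z /\<^sub>R norm z)) = norm x"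
      using r by (simp add: r_def)
    from radial[OF this] show "\<phi> x * 1 = \<phi> (r *\<^sub>R (z /\<^sub>R norm z))"
      by simp
  qed
  also have "\<dots> = \<phi> x * measure lebesgue (ball (0::'a) 1)"
    by (simp only: integral_mult_right lmeasure_integral[OF lmeasurable_ball])
  finally have "sphere_integral (\<lambda>\<theta>::'a. \<phi> (r *\<^sub>R \<theta>)) = DIM('a) * (\<phi> x * measure lebesgue (ball (0::'a) 1))"
    unfolding sphere_integral_def by simp
  moreover have "sphere_integral (\<lambda>\<theta>::'a. \<phi> (r *\<^sub>R \<theta>)) = 0"
    using mean r by blast
  ultimately show ?thesis
    by simp
qed

lemma Lplus_solution_eq_zero:
  fixes \<phi> :: "'a::euclidean_space \<Rightarrow> real"
  assumes \<sigma>: "0 < \<sigma>" and b: "\<sigma> + 1 < b"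
    and c: "\<And>x::'a. 0 < b * (real DIM('a) - b) - Lcoef p \<xi> \<beta> t x * (b - 1)"
    and C2: "C2_on (punct R) \<phi>" and X1: "inX1 \<sigma> R \<phi>"
    and eq: "\<forall>x\<in>punct R. Lplus p \<xi> \<beta> t \<phi> x = 0"
    and bd: "R \<noteq> \<infinity> \<longrightarrow> zero_bdry R \<phi>" and x: "x \<in> punct R"
  shows "\<phi> x = 0"
proof (rule radial_mean_zero_imp_zero[OF _ _ x])
  have X: "inX \<sigma> R \<phi>"
    using X1 by (simp add: inX1_def)
  show "\<phi> y = \<phi> x" if "norm y = norm x" for y
    using radial_if_reflection_invariant[OF Lplus_solution_reflection_invariant[OF \<sigma> b c C2 X eq bd]]
      x that by metis
  show "\<forall>r. 0 < r \<and> ereal r < R \<longrightarrow> sphere_integral (\<lambda>\<theta>. \<phi> (r *\<^sub>R \<theta>)) = 0"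
    using X1 by (simp add: inX1_def)
qed


lemma exponent_inequalities:
  fixes N p \<xi> \<beta> \<sigma> :: real
  assumes N: "3 \<le> N" and p: "N / (N - 1) < p" "p < 2"
    and \<xi>: "\<xi> = (p - 1) * (N - 1)" and \<beta>: "\<beta> = (p - 1) / (\<xi> - 1)" and \<sigma>: "\<sigma> = (2 - p) / (p - 1)"
  shows "0 < p" "0 < \<beta>" "0 < \<sigma>" "\<sigma> < N - 2"
    and "0 < (\<sigma> + 3 / 2) * (N - (\<sigma> + 3 / 2)) - p / \<beta> * (\<sigma> + 3 / 2 - 1)"
proof -
  have pN: "N < p * (N - 1)"
    using N p(1) by (simp add: pos_divide_less_eq)
  then have p1: "1 < p"
    using N by (smt (verit) mult_le_cancel_right2)
  have \<xi>1: "1 < \<xi>"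
    using pN \<xi> by (simp add: algebra_simps)
  show "0 < p" "0 < \<beta>" "0 < \<sigma>"
    using p1 \<xi>1 p(2) by (simp_all add: \<beta> \<sigma>)
  have "2 - p < (N - 2) * (p - 1)"
    using pN by (simp add: algebra_simps)
  then show "\<sigma> < N - 2"
    using p1 by (simp add: \<sigma> pos_divide_less_eq)
  define P where "P = p - 1"
  define u where "u = 1 / P"
  have P: "0 < P" "P * u = 1"
    using p1 by (simp_all add: P_def u_def)
  have "\<sigma> = u - 1"
    using P unfolding \<sigma> u_def P_def by (simp add: field_simps)
  moreover have "p / \<beta> = (N - 1) * (P + 1) - 1 - u"
    using P \<xi>1 unfolding \<beta> u_def by (simp add: field_simps \<xi> P_def)
  ultimately have "(\<sigma> + 3 / 2) * (N - (\<sigma> + 3 / 2)) - p / \<beta> * (\<sigma> + 3 / 2 - 1)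
      = (u - 1 / 2 + P * (N - 1)) / 2"
    using P(2) by algebra
  moreover have "1 / 2 < u" "1 < P * (N - 1)"
    using p1 p(2) pN by (simp_all add: u_def P_def field_simps)
  ultimately show "0 < (\<sigma> + 3 / 2) * (N - (\<sigma> + 3 / 2)) - p / \<beta> * (\<sigma> + 3 / 2 - 1)"
    by simp
qed

theorem lemma2p4:
  fixes p \<xi> \<beta> \<sigma> :: real and R t :: ereal
  assumes "DIM('a::euclidean_space) \<ge> 3"
    and "real DIM('a) / (real DIM('a) - 1) < p" and "p < 2"
    and "\<xi> = (p - 1) * (real DIM('a) - 1)"
    and "\<beta> = (p - 1) / (\<xi> - 1)"
    and "\<sigma> = (2 - p) / (p - 1)"
    and "0 < R" and "0 \<le> t"
  shows "(\<forall>\<phi> :: 'a \<Rightarrow> real.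
            C2_on (punct R) \<phi> \<and> inX1 \<sigma> R \<phi> \<and>
            (\<forall>x\<in>punct R. Lplus p \<xi> \<beta> t \<phi> x = 0) \<and>
            (R \<noteq> \<infinity> \<longrightarrow> zero_bdry R \<phi>)
          \<longrightarrow> (\<forall>x\<in>punct R. \<phi> x = 0))
       \<and> (\<forall>\<phi> :: 'a \<Rightarrow> real.
            C2_on (punct R) \<phi> \<and> inX \<sigma> R \<phi> \<and>
            (\<forall>x\<in>punct R. Lminus p \<xi> \<beta> t \<phi> x = 0) \<and>
            (R \<noteq> \<infinity> \<longrightarrow> zero_bdry R \<phi>)
          \<longrightarrow> (if R \<noteq> \<infinity> then (\<forall>x\<in>punct R. \<phi> x = 0)
               else (\<exists>c. \<forall>x\<in>punct R. \<phi> x = c)))"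
proof -
  have "3 \<le> real DIM('a)"
    using assms(1) by simp
  note exponents = exponent_inequalities[OF this assms(2-6)]
  define b where "b = \<sigma> + 3 / 2"
  have b: "\<sigma> + 1 < b"
    by (simp add: b_def)
  have c: "0 < b * (real DIM('a) - b) - Lcoef p \<xi> \<beta> t x * (b - 1)" for x :: 'a
    using mult_right_mono[OF Lcoef_bounds(2)[OF assms(8) exponents(2,1)], of "b - 1" \<xi> x]
      exponents(3,5) by (simp add: b_def)
  show ?thesis
  proof (intro conjI allI impI)
    fix \<phi> :: "'a \<Rightarrow> real"
    assume "C2_on (punct R) \<phi> \<and> inX1 \<sigma> R \<phi> \<and> (\<forall>x\<in>punct R. Lplus p \<xi> \<beta> t \<phi> x = 0) \<and>
      (R \<noteq> \<infinity> \<longrightarrow> zero_bdry R \<phi>)"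
    then show "\<forall>x\<in>punct R. \<phi> x = 0"
      using Lplus_solution_eq_zero[OF exponents(3) b c] by blast
  next
    fix \<phi> :: "'a \<Rightarrow> real"
    assume "C2_on (punct R) \<phi> \<and> inX \<sigma> R \<phi> \<and> (\<forall>x\<in>punct R. Lminus p \<xi> \<beta> t \<phi> x = 0) \<and>
      (R \<noteq> \<infinity> \<longrightarrow> zero_bdry R \<phi>)"
    then have "\<forall>x\<in>punct R. \<phi> x = 0"
      using Lminus_solution_eq_zero[OF exponents(3,4) Lcoef_bounds(1)[OF assms(8) exponents(2,1)]]
      by blast
    then show "if R \<noteq> \<infinity> then \<forall>x\<in>punct R. \<phi> x = 0 else \<exists>c. \<forall>x\<in>punct R. \<phi> x = c"
      by auto
  qed
qed

end
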